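(* Let $T$ be a tree and $g,h$ isometries of $T$. The product $gh$ is elliptic if and only if one of the following holds: (1) $g$ and $h$ are both elliptic and $\mathrm{Fix}(g)\cap\mathrm{Fix}(h)\neq\emptyset$; (2) $\tau(h)<\tau(g)$ (so $g$ is loxodromic) and $h$ creases an arc of $A(g)$ of length at least $\tfrac12(\tau(g)-\tau(h))$ in the negative direction; or the same situation with the roles of $g$ and $h$ exchanged; (3) $g$ and $h$ are both loxodromic, $\tau(g)=\tau(h)\le\ell(A(g)\cap A(h))$, and $g,h$ translate in opposite directions along $A(g)\cap A(h)$.
   Context: $T$ is a simplicial tree (with its path metric, edges of length 1) or a real tree. An isometry $g$ is elliptic if it fixes a point; $\mathrm{Fix}(g)$ is its fixed-point set and $\tau(g)=0$. Otherwise $g$ is loxodromic: it preserves a unique bi-infinite geodesic $A(g)$ (its axis) and translates along it by $\tau(g)>0$ (translation length). An arc is a geodesic segment; $\ell(\alpha)$ denotes its length. Two oriented arcs whose union lies in a single arc are coherent if their orientations are restrictions of one orientation of an arc containing both, and incoherent otherwise. An isometry $h$ creases an arc $\alpha$ of an arc or geodesic $\gamma$ if $\alpha\cup h\alpha\subseteq\gamma$, $\alpha$ and $h\alpha$ share at most an endpoint, and for an orientation $\vec\alpha$ the arcs $\vec\alpha$ and $h\vec\alpha$ are incoherent. When $\gamma=A(g)$ is oriented in the direction of translation of $g$, $h$ creases $\alpha$ in the negative direction if moreover $h\alpha$ precedes $\alpha$ along $A(g)$. *)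

theory Defs
  imports Complex_Main "HOL-Library.Extended_Real"
begin

text \<open>Real trees (this covers simplicial trees via their metric realisation).
  A tree is a subset T of a metric space.\<close>

definition is_segment :: "'a::metric_space set \<Rightarrow> 'a \<Rightarrow> 'a \<Rightarrow> 'a set \<Rightarrow> bool" where
  "is_segment T x y S \<longleftrightarrow>
     (\<exists>\<gamma>::real \<Rightarrow> 'a. \<gamma> 0 = x \<and> \<gamma> (dist x y) = y \<and>
        (\<forall>s\<in>{0..dist x y}. \<forall>t\<in>{0..dist x y}. dist (\<gamma> s) (\<gamma> t) = \<bar>s - t\<bar>) \<and>
        S = \<gamma> ` {0..dist x y} \<and> S \<subseteq> T)"

definition seg :: "'a::metric_space set \<Rightarrow> 'a \<Rightarrow> 'a \<Rightarrow> 'a set" where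
  "seg T x y = (THE S. is_segment T x y S)"

definition real_tree :: "'a::metric_space set \<Rightarrow> bool" where
  "real_tree T \<longleftrightarrow> T \<noteq> {} \<and>
     (\<forall>x\<in>T. \<forall>y\<in>T. \<exists>!S. is_segment T x y S) \<and>
     (\<forall>x\<in>T. \<forall>y\<in>T. \<forall>z\<in>T. seg T x y \<inter> seg T y z = {y} \<longrightarrow>
         seg T x y \<union> seg T y z = seg T x z)"

definition isometry :: "'a::metric_space set \<Rightarrow> ('a \<Rightarrow> 'a) \<Rightarrow> bool" where
  "isometry T g \<longleftrightarrow> g ` T = T \<and> (\<forall>x\<in>T. \<forall>y\<in>T. dist (g x) (g y) = dist x y)"

definition Fix :: "'a set \<Rightarrow> ('a \<Rightarrow> 'a) \<Rightarrow> 'a set" where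
  "Fix T g = {x\<in>T. g x = x}"

definition elliptic :: "'a set \<Rightarrow> ('a \<Rightarrow> 'a) \<Rightarrow> bool" where
  "elliptic T g \<longleftrightarrow> Fix T g \<noteq> {}"

definition loxodromic :: "'a set \<Rightarrow> ('a \<Rightarrow> 'a) \<Rightarrow> bool" where
  "loxodromic T g \<longleftrightarrow> \<not> elliptic T g"

definition axis_param :: "'a::metric_space set \<Rightarrow> ('a \<Rightarrow> 'a) \<Rightarrow> (real \<Rightarrow> 'a) \<Rightarrow> real \<Rightarrow> bool" where
  "axis_param T g \<gamma> \<tau> \<longleftrightarrow> \<tau> > 0 \<and> range \<gamma> \<subseteq> T \<and>
     (\<forall>s t. dist (\<gamma> s) (\<gamma> t) = \<bar>s - t\<bar>) \<and> (\<forall>t. g (\<gamma> t) = \<gamma> (t + \<tau>))"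

definition axis :: "'a::metric_space set \<Rightarrow> ('a \<Rightarrow> 'a) \<Rightarrow> 'a set" where
  "axis T g = (THE A. \<exists>\<gamma> \<tau>. axis_param T g \<gamma> \<tau> \<and> A = range \<gamma>)"

definition transl_len :: "'a::metric_space set \<Rightarrow> ('a \<Rightarrow> 'a) \<Rightarrow> real" where
  "transl_len T g = (if elliptic T g then 0 else (THE \<tau>. \<exists>\<gamma>. axis_param T g \<gamma> \<tau>))"

text \<open>Length of a geodesic subset (arc, ray, line) = its diameter, in the extended reals.\<close>
definition arc_len :: "'a::metric_space set \<Rightarrow> ereal" where
  "arc_len S = (SUP x\<in>S. SUP y\<in>S. ereal (dist x y))"

text \<open>With A(g) parametrised by \<gamma> in the direction of translation,
  \<alpha> = \<gamma>[a,b]; h\<alpha> = \<gamma>[c, c+(b-a)] lies in A(g), precedes \<alpha> (sharing at most the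
  endpoint), and h reverses the orientation (incoherence).\<close>
definition creases_neg :: "'a::metric_space set \<Rightarrow> ('a \<Rightarrow> 'a) \<Rightarrow> ('a \<Rightarrow> 'a) \<Rightarrow> real \<Rightarrow> bool" where
  "creases_neg T g h L \<longleftrightarrow>
     (\<exists>\<gamma> \<tau> a b c. axis_param T g \<gamma> \<tau> \<and> a \<le> b \<and> L \<le> b - a \<and> c + (b - a) \<le> a \<and>
        (\<forall>s\<in>{0..b - a}. h (\<gamma> (a + s)) = \<gamma> (c + (b - a) - s)))"

definition opposite_directions :: "'a::metric_space set \<Rightarrow> ('a \<Rightarrow> 'a) \<Rightarrow> ('a \<Rightarrow> 'a) \<Rightarrow> bool" where
  "opposite_directions T g h \<longleftrightarrow>
     (\<exists>\<gamma> \<sigma> \<delta> \<rho>. axis_param T g \<gamma> \<sigma> \<and> axis_param T h \<delta> \<rho> \<and>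
        (\<forall>s t u v. \<gamma> s = \<delta> u \<and> \<gamma> t = \<delta> v \<and> s < t \<longrightarrow> v < u))"

end

theory Submission
  imports Defs
begin

text \<open>All the tree geometry used comes from the existence of tripod centres, which yields the
  four point condition.  From it, an isometry k without fixed points has a point a with
  dist a (k (k a)) = 2 * dist a (k a) > 0, and interpolating the orbit of a by segments gives
  its axis.  For every y the segment [y, k y] passes through the projection \<pi> of y to the
  fixed point set or to the axis of k, and dist y (k y) = 2 * dist y \<pi> + \<tau>(k).

  Now let g (h p) = p and look at the segment [h p, p].  If g and h are elliptic, the midpoints
  of [p, h p] supplied by fixed points of g and of h coincide.  If \<tau>(h) < \<tau>(g), the projection
  \<pi> of p for h lies on the axis of g, and h maps the arc of that axis from \<pi> to the projection
  of p, of length (\<tau>(g) - \<tau>(h))/2, with reversed orientation onto the arc starting at the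
  projection of h p: this is the crease.
  If \<tau>(g) = \<tau>(h), the projections of h p to the axis of g and of p to the axis of h span a
  common segment of length \<tau> traversed in opposite directions.  Conversely, a crease or such an
  overlap of the axes exhibits a point fixed by g \<circ> h.\<close>

lemma continuous_on_if_isometric:
  fixes f :: "real \<Rightarrow> 'a::metric_space"
  assumes "\<And>s t. s \<in> S \<Longrightarrow> t \<in> S \<Longrightarrow> dist (f s) (f t) = \<bar>s - t\<bar>"
  shows "continuous_on S f"
  unfolding continuous_on_def tendsto_iff eventually_at
  using assms by (metis dist_real_def)

lemma closed_agreement_set:
  assumes "closed S" "continuous_on S f" "continuous_on S (g :: _ \<Rightarrow> 'a::metric_space)"
  shows "closed {t\<in>S. f t = g t}"
proof -
  have "{t\<in>S. f t = g t} = (\<lambda>t. dist (f t) (g t)) -` {0} \<inter> S" by auto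
  moreover have "continuous_on S (\<lambda>t. dist (f t) (g t))"
    using assms by (intro continuous_intros)
  ultimately show ?thesis using closed_vimage_Int assms(1) by fastforce
qed

lemma closed_bounded_real_attains_bounds:
  fixes S :: "real set"
  assumes "closed S" "S \<noteq> {}" "S \<subseteq> {a..b}"
  obtains m M where "m \<in> S" "M \<in> S" "\<And>t. t \<in> S \<Longrightarrow> m \<le> t \<and> t \<le> M"
proof -
  have "compact S" using compact_Int_closed[OF compact_Icc assms(1), of a b] assms(3)
    by (simp add: Int_absorb1)
  then show ?thesis using compact_attains_sup compact_attains_inf assms(2) that by metis
qed

definition between :: "'a::metric_space \<Rightarrow> 'a \<Rightarrow> 'a \<Rightarrow> bool" where
  "between x z y \<longleftrightarrow> dist x z + dist z y = dist x y"

lemma between_commute: "between x z y \<longleftrightarrow> between y z x"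
  unfolding between_def by (auto simp: dist_commute)

lemma between_trans:
  assumes "between y v c" "between x c y"
  shows "between x v y" "dist x v = dist x c + dist c v"
proof -
  have "dist x v \<le> dist x c + dist c v" "dist x y \<le> dist x v + dist v y"
    by (rule dist_triangle)+
  then show "between x v y" "dist x v = dist x c + dist c v"
    using assms unfolding between_def by (auto simp: dist_commute)
qed

lemma isometry_mem: "isometry T f \<Longrightarrow> x \<in> T \<Longrightarrow> f x \<in> T"
  unfolding isometry_def by blast

lemma isometry_dist: "isometry T f \<Longrightarrow> x \<in> T \<Longrightarrow> y \<in> T \<Longrightarrow> dist (f x) (f y) = dist x y"
  unfolding isometry_def by blast

lemma isometry_comp:
  assumes "isometry T f" "isometry T g"
  shows "isometry T (f \<circ> g)"
proof -
  have "(f \<circ> g) ` T = T" using assms unfolding isometry_def by (metis image_comp)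
  moreover have "dist ((f \<circ> g) x) ((f \<circ> g) y) = dist x y" if "x \<in> T" "y \<in> T" for x y
    using that isometry_dist[OF assms(1)] isometry_dist[OF assms(2)] isometry_mem[OF assms(2)] by simp
  ultimately show ?thesis unfolding isometry_def by blast
qed

lemma isometry_funpow: "isometry T f \<Longrightarrow> isometry T (f ^^ n)"
  by (induction n) (auto simp: isometry_def[of T id] intro: isometry_comp)

lemma elliptic_comp_iff: "elliptic T (f \<circ> k) \<longleftrightarrow> (\<exists>x\<in>T. f (k x) = x)"
  unfolding elliptic_def Fix_def by auto

lemma elliptic_comp_commute:
  assumes "isometry T f" "isometry T k"
  shows "elliptic T (f \<circ> k) \<longleftrightarrow> elliptic T (k \<circ> f)"
  unfolding elliptic_comp_iff using assms isometry_mem by metis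

lemma integer_orbit:
  assumes f: "isometry T f" and a: "a \<in> T"
  obtains P :: "int \<Rightarrow> 'a::metric_space" where "P 0 = a" "\<And>k. P k \<in> T" "\<And>k. f (P k) = P (k + 1)"
proof -
  define g where "g = inv_into T f"
  have fT: "f ` T = T" using f unfolding isometry_def by simp
  have gT: "y \<in> T \<Longrightarrow> g y \<in> T" for y unfolding g_def using inv_into_into[of y f T] fT by simp
  have fg: "y \<in> T \<Longrightarrow> f (g y) = y" for y unfolding g_def using f_inv_into_f[of y f T] fT by simp
  have gpT: "(g ^^ n) a \<in> T" for n by (induction n) (auto simp: a gT)
  have fpT: "(f ^^ n) a \<in> T" for n using isometry_mem[OF isometry_funpow[OF f] a] .
  define P where "P k = (if 0 \<le> k then (f ^^ nat k) a else (g ^^ nat (-k)) a)" for k :: int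
  have PT: "P k \<in> T" for k unfolding P_def using gpT fpT by auto
  have "f (P k) = P (k + 1)" for k
  proof (cases "0 \<le> k")
    case True
    then have "nat (k + 1) = Suc (nat k)" by simp
    then show ?thesis unfolding P_def using True by simp
  next
    case False
    then have "nat (-k) = Suc (nat (-(k+1)))" by simp
    then have "P k = g ((g ^^ nat (-(k+1))) a)" unfolding P_def using False by simp
    moreover have "(g ^^ nat (-(k+1))) a = P (k + 1)" unfolding P_def using False by auto
    ultimately show ?thesis using fg PT by simp
  qed
  moreover have "P 0 = a" unfolding P_def by simp
  ultimately show ?thesis using that PT by blast
qed

lemma dist_le_arc_len: "x \<in> S \<Longrightarrow> y \<in> S \<Longrightarrow> ereal (dist x y) \<le> arc_len S"
  unfolding arc_len_def by (meson SUP_upper SUP_upper2)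

lemma arc_len_le: "(\<And>x y. x \<in> S \<Longrightarrow> y \<in> S \<Longrightarrow> dist x y \<le> r) \<Longrightarrow> arc_len S \<le> ereal r"
  unfolding arc_len_def by (intro SUP_least) simp

lemma nonempty_if_arc_len_ge: "ereal r \<le> arc_len S \<Longrightarrow> S \<noteq> {}"
  unfolding arc_len_def by (auto simp: bot_ereal_def)

lemma opposite_lines_crossing:
  fixes \<gamma> \<delta> :: "real \<Rightarrow> 'a::metric_space"
  assumes \<gamma>: "\<And>s t. dist (\<gamma> s) (\<gamma> t) = \<bar>s - t\<bar>" and \<delta>: "\<And>u v. dist (\<delta> u) (\<delta> v) = \<bar>u - v\<bar>"
    and op: "\<And>s t u v. \<gamma> s = \<delta> u \<Longrightarrow> \<gamma> t = \<delta> v \<Longrightarrow> s < t \<Longrightarrow> v < u"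
    and 0: "\<gamma> s0 = \<delta> u0" and 1: "\<gamma> s = \<delta> u"
  shows "u = s0 + u0 - s"
proof -
  have d: "\<bar>u - u0\<bar> = \<bar>s - s0\<bar>" using \<gamma>[of s s0] \<delta>[of u u0] 0 1 by simp
  consider "s < s0" | "s = s0" | "s0 < s" by linarith
  then show ?thesis
    by cases (use op[OF 1 0] op[OF 0 1] d in auto)
qed

section \<open>Segments and the four point condition\<close>

locale metric_tree =
  fixes T :: "'a::metric_space set"
  assumes real_tree: "real_tree T"
begin

lemma is_segment_seg: "x \<in> T \<Longrightarrow> y \<in> T \<Longrightarrow> is_segment T x y (seg T x y)"
  using real_tree unfolding real_tree_def seg_def by (metis theI')

lemma seg_gluing:
  "x \<in> T \<Longrightarrow> y \<in> T \<Longrightarrow> z \<in> T \<Longrightarrow> seg T x y \<inter> seg T y z = {y} \<Longrightarrow>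
    seg T x y \<union> seg T y z = seg T x z"
  using real_tree unfolding real_tree_def by blast

lemma seg_parametrization:
  assumes "x \<in> T" "y \<in> T"
  obtains \<sigma> where "\<sigma> 0 = x" "\<sigma> (dist x y) = y"
    "\<And>s t. s \<in> {0..dist x y} \<Longrightarrow> t \<in> {0..dist x y} \<Longrightarrow> dist (\<sigma> s) (\<sigma> t) = \<bar>s - t\<bar>"
    "seg T x y = \<sigma> ` {0..dist x y}" "seg T x y \<subseteq> T"
  using is_segment_seg[OF assms] unfolding is_segment_def by metis

lemma seg_subset: "x \<in> T \<Longrightarrow> y \<in> T \<Longrightarrow> seg T x y \<subseteq> T"
  by (metis seg_parametrization)

lemma ends_mem_seg:
  assumes "x \<in> T" "y \<in> T"
  shows "x \<in> seg T x y" "y \<in> seg T x y"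
proof -
  obtain \<sigma> where "\<sigma> 0 = x" "\<sigma> (dist x y) = y" "seg T x y = \<sigma> ` {0..dist x y}"
    using seg_parametrization[OF assms] by metis
  moreover have "0 \<in> {0..dist x y}" "dist x y \<in> {0..dist x y}" by auto
  ultimately show "x \<in> seg T x y" "y \<in> seg T x y" by (metis image_eqI)+
qed

lemma compact_seg: "x \<in> T \<Longrightarrow> y \<in> T \<Longrightarrow> compact (seg T x y)"
  by (metis seg_parametrization continuous_on_if_isometric compact_continuous_image compact_Icc)

lemma dist_in_seg:
  assumes "x \<in> T" "y \<in> T" "u \<in> seg T x y" "v \<in> seg T x y"
  shows "dist u v = \<bar>dist x u - dist x v\<bar>"
proof -
  obtain \<sigma> where \<sigma>: "\<sigma> 0 = x"
    "\<And>s t. s \<in> {0..dist x y} \<Longrightarrow> t \<in> {0..dist x y} \<Longrightarrow> dist (\<sigma> s) (\<sigma> t) = \<bar>s - t\<bar>"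
    "seg T x y = \<sigma> ` {0..dist x y}"
    using seg_parametrization[OF assms(1,2)] by metis
  obtain r s where "r \<in> {0..dist x y}" "u = \<sigma> r" "s \<in> {0..dist x y}" "v = \<sigma> s"
    using assms(3,4) \<sigma>(3) by auto
  then show ?thesis using \<sigma>(1) \<sigma>(2)[of 0] \<sigma>(2)[of r s] by auto
qed

lemma between_if_mem_seg:
  assumes "x \<in> T" "y \<in> T" "v \<in> seg T x y"
  shows "between x v y"
proof -
  obtain \<sigma> where \<sigma>: "\<sigma> 0 = x" "\<sigma> (dist x y) = y"
    "\<And>s t. s \<in> {0..dist x y} \<Longrightarrow> t \<in> {0..dist x y} \<Longrightarrow> dist (\<sigma> s) (\<sigma> t) = \<bar>s - t\<bar>"
    "seg T x y = \<sigma> ` {0..dist x y}"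
    using seg_parametrization[OF assms(1,2)] by metis
  obtain r where "r \<in> {0..dist x y}" "v = \<sigma> r" using assms(3) \<sigma>(4) by auto
  then show ?thesis using \<sigma>(1,2) \<sigma>(3)[of 0 r] \<sigma>(3)[of r "dist x y"]
    unfolding between_def by auto
qed

text \<open>The gluing axiom applied at z: the segments [x,z] and [z,y] meet only in z,
  since a common point v would give dist x y \<le> dist x y - 2 * dist v z.\<close>
lemma mem_seg_if_between:
  assumes "x \<in> T" "y \<in> T" "z \<in> T" "between x z y"
  shows "z \<in> seg T x y"
proof -
  have "v = z" if "v \<in> seg T x z" "v \<in> seg T z y" for v
  proof -
    have "between x v z" "between z v y"
      using that between_if_mem_seg assms(1-3) by blast+
    moreover have "dist x y \<le> dist x v + dist v y" by (rule dist_triangle)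
    ultimately have "dist v z = 0"
      using assms(4) dist_commute[of z v] zero_le_dist[of v z] unfolding between_def by linarith
    then show "v = z" by simp
  qed
  then have "seg T x z \<inter> seg T z y = {z}" using ends_mem_seg assms by blast
  then show ?thesis using seg_gluing ends_mem_seg assms(1-3) by blast
qed

lemma mem_seg_iff_between:
  "x \<in> T \<Longrightarrow> y \<in> T \<Longrightarrow> z \<in> seg T x y \<longleftrightarrow> z \<in> T \<and> between x z y"
  using mem_seg_if_between between_if_mem_seg seg_subset by blast

lemma dist_between:
  assumes "x \<in> T" "y \<in> T" "z \<in> T" "w \<in> T" "between x z y" "between x w y"
  shows "dist z w = \<bar>dist x z - dist x w\<bar>"
  using assms dist_in_seg mem_seg_iff_between by blast

lemma between_unique:
  assumes "x \<in> T" "y \<in> T" "z \<in> T" "w \<in> T" "between x z y" "between x w y"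
    and "dist x z = dist x w"
  shows "z = w"
  using dist_between[OF assms(1-6)] assms(7) by simp

lemma point_on_seg_exists:
  assumes "x \<in> T" "y \<in> T" "0 \<le> r" "r \<le> dist x y"
  obtains z where "z \<in> T" "dist x z = r" "dist z y = dist x y - r"
proof -
  obtain \<sigma> where \<sigma>: "\<sigma> 0 = x" "\<sigma> (dist x y) = y"
    "\<And>s t. s \<in> {0..dist x y} \<Longrightarrow> t \<in> {0..dist x y} \<Longrightarrow> dist (\<sigma> s) (\<sigma> t) = \<bar>s - t\<bar>"
    "seg T x y = \<sigma> ` {0..dist x y}" "seg T x y \<subseteq> T"
    using seg_parametrization[OF assms(1,2)] by metis
  have "\<sigma> r \<in> T" using \<sigma>(4,5) assms(3,4) by auto
  then show ?thesis
    using that \<sigma>(1,2) \<sigma>(3)[of 0 r] \<sigma>(3)[of r "dist x y"] assms(3,4) by auto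
qed

text \<open>The centre c is the point of the compact set [x,y] \<inter> [x,w] farthest from x.\<close>
lemma tripod_center:
  assumes "x \<in> T" "y \<in> T" "w \<in> T"
  obtains c where "c \<in> T" "between x c y" "between x c w" "between y c w"
proof -
  have "compact (seg T x y \<inter> seg T x w)"
    using compact_seg assms by (simp add: compact_Int_closed compact_imp_closed)
  moreover have "x \<in> seg T x y \<inter> seg T x w" using ends_mem_seg assms by blast
  moreover have "continuous_on UNIV (dist x)" by (intro continuous_intros)
  ultimately obtain c where c: "c \<in> seg T x y" "c \<in> seg T x w"
    and far: "\<And>v. v \<in> seg T x y \<inter> seg T x w \<Longrightarrow> dist x v \<le> dist x c"
    using continuous_attains_sup[of "seg T x y \<inter> seg T x w" "dist x"]
    by (metis continuous_on_subset empty_iff subset_UNIV IntE)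
  have cT: "c \<in> T" and xcy: "between x c y" and xcw: "between x c w"
    using c mem_seg_iff_between assms by blast+
  have "v = c" if "v \<in> seg T y c" "v \<in> seg T c w" for v
  proof -
    have "v \<in> T" "between y v c" "between w v c"
      using that mem_seg_iff_between assms cT between_commute by blast+
    then have "v \<in> seg T x y \<inter> seg T x w" "dist x v = dist x c + dist c v"
      using between_trans[of y v c x] between_trans[of w v c x] xcy xcw
        mem_seg_if_between assms by auto
    then show "v = c" using far by fastforce
  qed
  then have "seg T y c \<inter> seg T c w = {c}" using ends_mem_seg assms cT by blast
  then have "c \<in> seg T y w" using seg_gluing ends_mem_seg assms cT by blast
  then show ?thesis using that cT xcy xcw mem_seg_iff_between assms by blast
qed

lemma four_point:
  assumes "x \<in> T" "y \<in> T" "z \<in> T" "w \<in> T"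
  shows "dist y z + dist x w \<le> max (dist x y + dist z w) (dist x z + dist y w)"
proof -
  obtain c1 where c1: "c1 \<in> T" "between x c1 y" "between x c1 w" "between y c1 w"
    using tripod_center[OF assms(1,2,4)] .
  obtain c2 where c2: "c2 \<in> T" "between x c2 z" "between x c2 w" "between z c2 w"
    using tripod_center[OF assms(1,3,4)] .
  have c12: "dist c1 c2 = \<bar>dist x c1 - dist x c2\<bar>"
    using dist_between[OF assms(1,4) c1(1) c2(1) c1(3) c2(3)] .
  have "dist y z \<le> dist y c1 + dist c1 z" "dist y z \<le> dist y c2 + dist c2 z"
    "dist x z \<le> dist x c1 + dist c1 z" "dist x y \<le> dist x c2 + dist c2 y"
    "dist c1 z \<le> dist c1 c2 + dist c2 z" "dist c2 y \<le> dist c2 c1 + dist c1 y"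
    by (rule dist_triangle)+
  then show ?thesis
    using c1 c2 c12 unfolding between_def
    by (cases "dist x c1 \<le> dist x c2") (auto simp: dist_commute)
qed

lemma four_point_gromov:
  assumes "x \<in> T" "y \<in> T" "z \<in> T" "w \<in> T"
  shows "dist x y + dist x z - dist y z \<ge>
    min (dist x y + dist x w - dist y w) (dist x z + dist x w - dist z w)"
  using four_point[OF assms] by (auto simp: dist_commute)

lemma fixed_midpoint:
  assumes f: "isometry T f" and p: "p \<in> T" "f p = p" and x: "x \<in> T"
  obtains m where "m \<in> T" "f m = m" "dist x m = dist x (f x) / 2" "dist m (f x) = dist x (f x) / 2"
proof -
  have fx: "f x \<in> T" using isometry_mem[OF f x] .
  obtain c where c: "c \<in> T" "between p c x" "between p c (f x)" "between x c (f x)"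
    using tripod_center[OF p(1) x fx] .
  have fc: "f c \<in> T" using isometry_mem[OF f c(1)] .
  have "dist p (f c) = dist p c" using isometry_dist[OF f p(1) c(1)] p(2) by simp
  moreover have "between p (f c) (f x)"
    using c(2) isometry_dist[OF f c(1) x] isometry_dist[OF f p(1) x] isometry_dist[OF f p(1) c(1)] p(2)
    unfolding between_def by simp
  ultimately have "f c = c" using between_unique[OF p(1) fx fc c(1) _ c(3)] by simp
  moreover have "dist x c = dist c (f x)"
    using c(2,3) isometry_dist[OF f p(1) x] p(2) unfolding between_def by (simp add: dist_commute)
  ultimately show ?thesis using that c(1,4) unfolding between_def by auto
qed

section \<open>Lines and axes\<close>

definition geodesic_line :: "(real \<Rightarrow> 'a) \<Rightarrow> bool" where
  "geodesic_line \<gamma> \<longleftrightarrow> range \<gamma> \<subseteq> T \<and> (\<forall>s t. dist (\<gamma> s) (\<gamma> t) = \<bar>s - t\<bar>)"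

lemma geodesic_lineD:
  "geodesic_line \<gamma> \<Longrightarrow> \<gamma> t \<in> T"
  "geodesic_line \<gamma> \<Longrightarrow> dist (\<gamma> s) (\<gamma> t) = \<bar>s - t\<bar>"
  unfolding geodesic_line_def by auto

lemma dist_to_line_on_interval:
  assumes \<gamma>: "geodesic_line \<gamma>" and p: "p \<in> T" and "lo \<le> hi"
  obtains u where "lo \<le> u" "u \<le> hi"
    "\<And>s. lo \<le> s \<Longrightarrow> s \<le> hi \<Longrightarrow> dist p (\<gamma> s) = dist p (\<gamma> u) + \<bar>s - u\<bar>"
proof -
  note L = geodesic_lineD[OF \<gamma>]
  obtain c where c: "c \<in> T" "between p c (\<gamma> lo)" "between p c (\<gamma> hi)" "between (\<gamma> lo) c (\<gamma> hi)"
    using tripod_center[OF p L(1) L(1)] .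
  define u where "u = lo + dist (\<gamma> lo) c"
  have "dist (\<gamma> lo) (\<gamma> hi) = hi - lo" using L(2) \<open>lo \<le> hi\<close> by simp
  then have u: "lo \<le> u" "u \<le> hi"
    using c(4) zero_le_dist[of c "\<gamma> hi"] zero_le_dist[of "\<gamma> lo" c]
    unfolding u_def between_def by linarith+
  then have "between (\<gamma> lo) (\<gamma> u) (\<gamma> hi)" unfolding between_def L(2) by simp
  then have cu: "c = \<gamma> u"
    using between_unique[OF L(1) L(1) c(1) L(1) c(4)] L(2)[of lo u] u_def by simp
  show ?thesis
  proof (rule that[OF u])
    fix s assume "lo \<le> s" "s \<le> hi"
    moreover have "dist p (\<gamma> s) \<le> dist p c + dist c (\<gamma> s)"
      "dist p (\<gamma> hi) \<le> dist p (\<gamma> s) + dist (\<gamma> s) (\<gamma> hi)"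
      "dist p (\<gamma> lo) \<le> dist p (\<gamma> s) + dist (\<gamma> s) (\<gamma> lo)"
      by (rule dist_triangle)+
    ultimately show "dist p (\<gamma> s) = dist p (\<gamma> u) + \<bar>s - u\<bar>"
      using c(2,3) cu unfolding between_def by (cases "s \<le> u") (auto simp: L(2) dist_commute)
  qed
qed

lemma dist_to_line_attains_min:
  assumes \<gamma>: "geodesic_line \<gamma>" and p: "p \<in> T"
  obtains t0 where "\<And>t. dist p (\<gamma> t0) \<le> dist p (\<gamma> t)"
proof -
  note L = geodesic_lineD[OF \<gamma>]
  define R where "R = dist p (\<gamma> 0)"
  have "continuous_on UNIV \<gamma>" using continuous_on_if_isometric L(2) by blast
  then have "continuous_on {-2*R..2*R} (\<lambda>t. dist p (\<gamma> t))"
    by (intro continuous_intros) (auto intro: continuous_on_subset)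
  moreover have "{-2*R..2*R} \<noteq> {}" unfolding R_def by simp
  ultimately obtain t0 where t0: "t0 \<in> {-2*R..2*R}"
    and min: "\<And>t. t \<in> {-2*R..2*R} \<Longrightarrow> dist p (\<gamma> t0) \<le> dist p (\<gamma> t)"
    using continuous_attains_inf[OF compact_Icc] by metis
  have "dist p (\<gamma> t0) \<le> dist p (\<gamma> t)" for t
  proof (cases "t \<in> {-2*R..2*R}")
    case False
    have "dist (\<gamma> 0) (\<gamma> t) \<le> dist (\<gamma> 0) p + dist p (\<gamma> t)" by (rule dist_triangle)
    then show ?thesis using False min[of 0] unfolding R_def L(2) by (auto simp: dist_commute)
  qed (rule min)
  then show ?thesis using that by blast
qed

lemma dist_to_line:
  assumes "geodesic_line \<gamma>" "p \<in> T"
  obtains D t0 where "D \<ge> 0" "\<And>t. dist p (\<gamma> t) = D + \<bar>t - t0\<bar>"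
proof -
  obtain t0 where min: "\<And>t. dist p (\<gamma> t0) \<le> dist p (\<gamma> t)"
    using dist_to_line_attains_min[OF assms] by blast
  have "dist p (\<gamma> t) = dist p (\<gamma> t0) + \<bar>t - t0\<bar>" for t
  proof -
    have "min t t0 \<le> max t t0" by simp
    then obtain u where V:
      "\<And>s. min t t0 \<le> s \<Longrightarrow> s \<le> max t t0 \<Longrightarrow> dist p (\<gamma> s) = dist p (\<gamma> u) + \<bar>s - u\<bar>"
      using dist_to_line_on_interval[OF assms] by blast
    have "dist p (\<gamma> t0) = dist p (\<gamma> u) + \<bar>t0 - u\<bar>" by (rule V) simp_all
    then have "u = t0" using min[of u] by linarith
    moreover have "dist p (\<gamma> t) = dist p (\<gamma> u) + \<bar>t - u\<bar>" by (rule V) simp_all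
    ultimately show ?thesis by simp
  qed
  then show ?thesis using that zero_le_dist by blast
qed

lemma axis_paramD:
  assumes "axis_param T f \<gamma> \<tau>"
  shows "\<tau> > 0" "geodesic_line \<gamma>" "\<gamma> t \<in> T" "dist (\<gamma> s) (\<gamma> t) = \<bar>s - t\<bar>"
    "f (\<gamma> t) = \<gamma> (t + \<tau>)"
  using assms unfolding axis_param_def geodesic_line_def by auto

text \<open>Comparing p, f p with two far-away points of the axis, the four point condition
  forces the projections of p and f p to the axis to be \<tau> apart.\<close>
lemma axis_displacement:
  assumes f: "isometry T f" and ax: "axis_param T f \<gamma> \<tau>" and p: "p \<in> T"
    and pr: "\<And>t. dist p (\<gamma> t) = D + \<bar>t - t0\<bar>"
  shows "dist p (f p) = 2*D + \<tau>" "\<And>t. dist (f p) (\<gamma> t) = D + \<bar>t - t0 - \<tau>\<bar>"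
proof -
  note A = axis_paramD[OF ax]
  have fp: "f p \<in> T" using isometry_mem[OF f p] .
  show pr2: "dist (f p) (\<gamma> t) = D + \<bar>t - t0 - \<tau>\<bar>" for t
  proof -
    have "\<gamma> t = f (\<gamma> (t - \<tau>))" using A(5)[of "t - \<tau>"] by simp
    then have "dist (f p) (\<gamma> t) = dist p (\<gamma> (t - \<tau>))"
      using isometry_dist[OF f p A(3)] by simp
    then show ?thesis using pr[of "t - \<tau>"] by (simp add: algebra_simps)
  qed
  define N where "N = \<bar>t0\<bar> + \<tau> + 1"
  define a where "a = \<gamma> (-N)"
  define b where "b = \<gamma> N"
  have ab: "a \<in> T" "b \<in> T" unfolding a_def b_def using A(3) by auto
  have d1: "dist p a = D + N + t0" using pr[of "-N"] A(1) unfolding a_def N_def by auto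
  have d2: "dist p b = D + N - t0" using pr[of "N"] A(1) unfolding b_def N_def by auto
  have d3: "dist (f p) a = D + N + t0 + \<tau>" using pr2[of "-N"] A(1) unfolding a_def N_def by auto
  have d4: "dist (f p) b = D + N - t0 - \<tau>" using pr2[of "N"] A(1) unfolding b_def N_def by auto
  have d5: "dist a b = 2 * N" using A(4)[of "-N" N] A(1) unfolding a_def b_def N_def by auto
  have "dist (f p) a + dist p b \<le> max (dist p (f p) + dist a b) (dist p a + dist (f p) b)"
    using four_point[OF p fp ab(1) ab(2)] by (simp add: dist_commute)
  moreover have "dist a b + dist p (f p) \<le> max (dist p a + dist b (f p)) (dist p b + dist a (f p))"
    using four_point[OF p ab(1) ab(2) fp] .
  ultimately show "dist p (f p) = 2*D + \<tau>"
    using A(1) unfolding d1 d2 d3 d4 d5 dist_commute[of b "f p"] dist_commute[of a "f p"] max_def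
    by (auto split: if_splits)
qed

lemma not_elliptic_if_axis_param:
  assumes f: "isometry T f" and ax: "axis_param T f \<gamma> \<tau>"
  shows "\<not> elliptic T f"
proof
  assume "elliptic T f"
  then obtain p where p: "p \<in> T" "f p = p" unfolding elliptic_def Fix_def by auto
  obtain D t0 where "D \<ge> 0" and pr: "\<And>t. dist p (\<gamma> t) = D + \<bar>t - t0\<bar>"
    using dist_to_line[OF axis_paramD(2)[OF ax] p(1)] by blast
  then show False
    using axis_displacement(1)[OF f ax p(1) pr] p(2) axis_paramD(1)[OF ax] by simp
qed

text \<open>A point p on a second axis is displaced by \<tau>' by f and by 2\<tau>' by f \<circ> f; comparing
  with the displacement formula for the first axis forces D = 0 and \<tau>' = \<tau>.\<close>
lemma axis_param_unique:
  assumes f: "isometry T f" and ax: "axis_param T f \<gamma> \<tau>" and ax': "axis_param T f \<gamma>' \<tau>'"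
  shows "\<tau>' = \<tau>" "\<gamma>' s \<in> range \<gamma>"
proof -
  note A' = axis_paramD[OF ax']
  define p where "p = \<gamma>' s"
  have p: "p \<in> T" unfolding p_def using A'(3) .
  obtain D t0 where pr: "\<And>t. dist p (\<gamma> t) = D + \<bar>t - t0\<bar>"
    using dist_to_line[OF axis_paramD(2)[OF ax] p] by blast
  have ax2: "axis_param T (f \<circ> f) \<gamma> (2*\<tau>)"
    using ax unfolding axis_param_def by (auto simp: algebra_simps)
  have "dist p (f p) = 2*D + \<tau>" using axis_displacement[OF f ax p pr] by simp
  moreover have "dist p ((f \<circ> f) p) = 2*D + 2*\<tau>"
    using axis_displacement[OF isometry_comp[OF f f] ax2 p pr] by simp
  moreover have "dist p (f p) = \<tau>'" "dist p ((f \<circ> f) p) = 2*\<tau>'"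
    using A'(1) A'(4) A'(5) unfolding p_def by (simp_all add: add.assoc)
  ultimately show "\<tau>' = \<tau>" and "\<gamma>' s \<in> range \<gamma>"
    using pr[of t0] unfolding p_def by auto
qed

lemma transl_len_axis_param:
  assumes f: "isometry T f" and ax: "axis_param T f \<gamma> \<tau>"
  shows "transl_len T f = \<tau>" "axis T f = range \<gamma>"
proof -
  have "(THE \<tau>. \<exists>\<gamma>. axis_param T f \<gamma> \<tau>) = \<tau>"
    using ax axis_param_unique(1)[OF f ax] by blast
  then show "transl_len T f = \<tau>"
    unfolding transl_len_def using not_elliptic_if_axis_param[OF f ax] by simp
  have "(THE A. \<exists>\<gamma> \<tau>. axis_param T f \<gamma> \<tau> \<and> A = range \<gamma>) = range \<gamma>"
    using ax axis_param_unique(2)[OF f ax] axis_param_unique(2)[OF f _ ax]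
    by (intro the_equality) blast+
  then show "axis T f = range \<gamma>" unfolding axis_def .
qed

section \<open>Existence of axes\<close>

text \<open>The midpoint of [x, f x] is fixed by f.\<close>
lemma elliptic_if_dist_funpow2_le:
  assumes f: "isometry T f" and x: "x \<in> T" and le: "dist x (f (f x)) \<le> dist x (f x)"
  shows "elliptic T f"
proof -
  define d where "d = dist x (f x)"
  have fx: "f x \<in> T" and ffx: "f (f x) \<in> T" using isometry_mem[OF f] x by auto
  have dff: "dist (f x) (f (f x)) = d" unfolding d_def using isometry_dist[OF f x fx] .
  obtain m where m: "m \<in> T" "dist x m = d/2" "dist m (f x) = d - d/2"
    using point_on_seg_exists[OF x fx, of "d/2"] unfolding d_def by auto
  have "dist (f x) m + dist (f x) (f (f x)) - dist m (f (f x)) \<ge>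
    min (dist (f x) m + dist (f x) x - dist m x) (dist (f x) (f (f x)) + dist (f x) x - dist (f (f x)) x)"
    using four_point_gromov[OF fx m(1) ffx x] .
  then have "dist m (f (f x)) \<le> d/2" using m le dff
    by (auto simp: dist_commute d_def min_def split: if_splits)
  moreover have "dist (f x) (f (f x)) \<le> dist (f x) m + dist m (f (f x))" by (rule dist_triangle)
  ultimately have "between (f x) m (f (f x))"
    using m dff unfolding between_def by (simp add: dist_commute)
  moreover have "between (f x) (f m) (f (f x))" "dist (f x) (f m) = d/2"
    using isometry_dist[OF f x m(1)] isometry_dist[OF f m(1) fx] m dff unfolding between_def by simp_all
  ultimately have "f m = m"
    using between_unique[OF fx ffx isometry_mem[OF f m(1)] m(1)] m(3) by (simp add: dist_commute)
  then show ?thesis unfolding elliptic_def Fix_def using m(1) by auto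
qed

text \<open>Otherwise the point a of [x, f x] at distance L from x, where
  L = dist x (f x) - dist x (f (f x)) / 2, already lies on the axis: the Gromov
  products at f x and at f a show that a, f a, f (f a) are aligned.\<close>
lemma aligned_point_if_dist_funpow2_gt:
  assumes f: "isometry T f" and x: "x \<in> T" and gt: "dist x (f (f x)) > dist x (f x)"
  obtains a where "a \<in> T" "dist a (f a) > 0" "dist a (f (f a)) = 2 * dist a (f a)"
proof -
  define d where "d = dist x (f x)"
  define L where "L = d - dist x (f (f x)) / 2"
  define \<tau> where "\<tau> = d - 2*L"
  have fx: "f x \<in> T" and ffx: "f (f x) \<in> T" using isometry_mem[OF f] x by auto
  have dff: "dist (f x) (f (f x)) = d" unfolding d_def using isometry_dist[OF f x fx] .
  have L0: "0 \<le> L" "L \<le> d" "2 * L < d" unfolding L_def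
    using dist_triangle[of x "f (f x)" "f x"] dff gt by (auto simp: d_def dist_commute)
  have tp: "\<tau> > 0" unfolding \<tau>_def using L0 by simp
  obtain a where a: "a \<in> T" "dist x a = L" "dist a (f x) = d - L"
    using point_on_seg_exists[OF x fx L0(1)] L0(2) unfolding d_def by auto
  have fa: "f a \<in> T" and ffa: "f (f a) \<in> T" using isometry_mem[OF f] a(1) by auto
  have fa1: "dist (f x) (f a) = L" using isometry_dist[OF f x a(1)] a(2) by simp
  have fa2: "dist (f a) (f (f x)) = d - L" using isometry_dist[OF f a(1) fx] a(3) by simp
  have xffx: "dist x (f (f x)) = 2*d - 2*L" unfolding L_def by simp
  have "dist a (f (f x)) = 2*d - 3*L"
    using four_point_gromov[OF fx a(1) ffx x] four_point_gromov[OF fx x ffx a(1)] a dff L0(3) xffx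
    by (auto simp: dist_commute d_def min_def split: if_splits)
  then have daf: "dist a (f a) = \<tau>"
    using four_point_gromov[OF fx a(1) fa ffx] dist_triangle[of "f x" a "f a"] a fa1 fa2 dff L0(3)
    unfolding \<tau>_def by (auto simp: dist_commute min_def split: if_splits)
  have dxfa: "dist x (f a) = d - L"
    using four_point_gromov[OF fx x fa ffx] dist_triangle[of "f x" x "f a"] fa1 fa2 dff xffx L0(3)
    by (auto simp: dist_commute d_def min_def split: if_splits)
  have h1: "dist (f a) (f (f a)) = \<tau>" using isometry_dist[OF f a(1) fa] daf by simp
  have h2: "dist (f (f a)) (f (f x)) = L" using isometry_dist[OF f fa fx] fa1 by (simp add: dist_commute)
  have "dist a (f (f a)) \<ge> 2*\<tau>"
    using four_point_gromov[OF fa x ffx a(1)] four_point_gromov[OF fa a(1) ffx ffa]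
      dxfa fa2 xffx a daf h1 h2 tp unfolding \<tau>_def
    by (auto simp: dist_commute min_def split: if_splits)
  moreover have "dist a (f (f a)) \<le> dist a (f a) + dist (f a) (f (f a))" by (rule dist_triangle)
  ultimately have "dist a (f (f a)) = 2 * dist a (f a)" using daf h1 by linarith
  moreover have "dist a (f a) > 0" using daf tp by simp
  ultimately show ?thesis using that a(1) by blast
qed

lemma aligned_point_if_not_elliptic:
  assumes f: "isometry T f" and ne: "\<not> elliptic T f"
  obtains a where "a \<in> T" "dist a (f a) > 0" "dist a (f (f a)) = 2 * dist a (f a)"
proof -
  have "T \<noteq> {}" using real_tree unfolding real_tree_def by simp
  then obtain x where x: "x \<in> T" by blast
  show ?thesis
  proof (cases "dist x (f (f x)) \<le> dist x (f x)")
    case True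
    then show ?thesis using elliptic_if_dist_funpow2_le[OF f x] ne by blast
  next
    case False
    then have "dist x (f (f x)) > dist x (f x)" by simp
    from aligned_point_if_dist_funpow2_gt[OF f x this] show ?thesis using that by blast
  qed
qed

lemma dist_funpow_if_aligned:
  assumes f: "isometry T f" and a: "a \<in> T"
    and aligned: "dist a (f (f a)) = 2 * dist a (f a)"
  shows "dist a ((f ^^ n) a) = real n * dist a (f a)"
proof -
  define \<tau> where "\<tau> = dist a (f a)"
  have fa: "f a \<in> T" "f (f a) \<in> T" using isometry_mem[OF f] a by auto
  have PT: "(f ^^ m) a \<in> T" for m using isometry_mem[OF isometry_funpow[OF f] a] .
  have "dist a ((f ^^ n) a) = real n * \<tau> \<and> dist a ((f ^^ Suc n) a) = real (Suc n) * \<tau>"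
  proof (induction n)
    case 0 then show ?case unfolding \<tau>_def by simp
  next
    case (Suc n)
    define q where "q = (f ^^ n) a"
    define r where "r = (f ^^ Suc n) a"
    define s where "s = (f ^^ Suc (Suc n)) a"
    have qrs: "q \<in> T" "r \<in> T" "s \<in> T" unfolding q_def r_def s_def by (rule PT)+
    have "dist q r = \<tau>"
      using isometry_dist[OF isometry_funpow[OF f] a fa(1), of n] unfolding q_def r_def \<tau>_def
      by (simp add: funpow_swap1)
    moreover have "dist q s = 2*\<tau>"
      using isometry_dist[OF isometry_funpow[OF f] a fa(2), of n] aligned unfolding q_def s_def \<tau>_def
      by (simp add: funpow_swap1)
    moreover have "dist r s = \<tau>"
      using isometry_dist[OF isometry_funpow[OF f] a fa(1), of "Suc n"] unfolding r_def s_def \<tau>_def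
      by (simp add: funpow_swap1)
    moreover have "dist a q = real n * \<tau>" "dist a r = real (Suc n) * \<tau>"
      using Suc unfolding q_def r_def by auto
    ultimately have "dist a s \<ge> real (Suc (Suc n)) * \<tau>"
      using four_point_gromov[OF qrs(2) qrs(1) qrs(3) a]
      by (auto simp: dist_commute min_def algebra_simps split: if_splits)
    moreover have "dist a s \<le> dist a r + dist r s" by (rule dist_triangle)
    ultimately show ?case
      using \<open>dist a r = real (Suc n) * \<tau>\<close> \<open>dist r s = \<tau>\<close> unfolding r_def s_def
      by (simp add: algebra_simps)
  qed
  then show ?thesis unfolding \<tau>_def by simp
qed

lemma dist_integer_orbit_if_aligned:
  assumes f: "isometry T f" and a: "a \<in> T"
    and aligned: "dist a (f (f a)) = 2 * dist a (f a)"
    and P: "P 0 = a" "\<And>k. P k \<in> T" "\<And>k. f (P k) = P (k + 1)"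
  shows "dist (P i) (P j) = \<bar>of_int i - of_int j\<bar> * dist a (f a)"
proof -
  have Pnat: "P (int n) = (f ^^ n) a" for n
  proof (induction n)
    case (Suc n)
    have "P (int (Suc n)) = f (P (int n))" using P(3)[of "int n"] by (simp add: add.commute)
    then show ?case using Suc by simp
  qed (simp add: P(1))
  have shift: "dist (P (i + int m)) (P (j + int m)) = dist (P i) (P j)" for i j m
  proof (induction m)
    case (Suc m)
    have "i + int (Suc m) = (i + int m) + 1" "j + int (Suc m) = (j + int m) + 1" by simp_all
    then have "P (i + int (Suc m)) = f (P (i + int m))" "P (j + int (Suc m)) = f (P (j + int m))"
      using P(3) by metis+
    then show ?case using Suc isometry_dist[OF f P(2) P(2)] by simp
  qed simp
  have ord: "dist (P i) (P j) = (of_int j - of_int i) * dist a (f a)" if "i \<le> j" for i j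
  proof -
    have "dist (P i) (P j) = dist (P 0) (P (j - i))"
    proof (cases "0 \<le> i")
      case True
      then show ?thesis using shift[of 0 "nat i" "j - i"] by simp
    next
      case False
      then show ?thesis using shift[of i "nat (-i)" j] by simp
    qed
    also have "\<dots> = of_int (j - i) * dist a (f a)"
      using dist_funpow_if_aligned[OF f a aligned, of "nat (j - i)"] Pnat[of "nat (j - i)"] P(1) that
      by simp
    finally show ?thesis by simp
  qed
  show ?thesis using ord[of i j] ord[of j i] by (cases "i \<le> j") (auto simp: dist_commute)
qed

text \<open>The point of parameter t is taken on [P k, P (k + 1)] for k = \<lfloor>t/\<tau>\<rfloor>.\<close>
lemma integer_orbit_interpolation:
  assumes tp: "\<tau> > 0" and PT: "\<And>k. P k \<in> T"
    and Pd: "\<And>i j. dist (P i) (P j) = \<bar>of_int i - of_int j\<bar> * \<tau>"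
  obtains \<gamma> where "\<And>t. \<gamma> t \<in> T"
    "\<And>m n t. m \<le> \<lfloor>t / \<tau>\<rfloor> \<Longrightarrow> \<lfloor>t / \<tau>\<rfloor> + 1 \<le> n \<Longrightarrow>
      dist (P m) (\<gamma> t) = t - of_int m * \<tau> \<and> dist (\<gamma> t) (P n) = of_int n * \<tau> - t"
proof -
  define k where "k t = \<lfloor>t / \<tau>\<rfloor>" for t
  define r where "r t = t - of_int (k t) * \<tau>" for t
  have r0: "0 \<le> r t" "r t < \<tau>" for t
    unfolding r_def k_def using floor_divide_lower[OF tp, of t] floor_divide_upper[OF tp, of t]
    by (auto simp: algebra_simps)
  define \<gamma> where "\<gamma> t = (SOME z. z \<in> T \<and> dist (P (k t)) z = r t \<and> dist z (P (k t + 1)) = \<tau> - r t)"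
    for t
  have G1: "\<gamma> t \<in> T \<and> dist (P (k t)) (\<gamma> t) = r t \<and> dist (\<gamma> t) (P (k t + 1)) = \<tau> - r t" for t
    unfolding \<gamma>_def
    by (rule someI_ex, rule point_on_seg_exists[OF PT PT, of "r t" "k t" "k t + 1"])
      (use r0[of t] Pd[of "k t" "k t + 1"] in auto)
  have "dist (P m) (\<gamma> t) = t - of_int m * \<tau> \<and> dist (\<gamma> t) (P n) = of_int n * \<tau> - t"
    if "m \<le> k t" "k t + 1 \<le> n" for m n t
  proof -
    have "dist (P m) (\<gamma> t) \<le> dist (P m) (P (k t)) + dist (P (k t)) (\<gamma> t)"
      "dist (\<gamma> t) (P n) \<le> dist (\<gamma> t) (P (k t + 1)) + dist (P (k t + 1)) (P n)"
      "dist (P m) (P n) \<le> dist (P m) (\<gamma> t) + dist (\<gamma> t) (P n)" by (rule dist_triangle)+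
    moreover have "dist (P m) (P (k t)) = (of_int (k t) - of_int m) * \<tau>"
      "dist (P (k t + 1)) (P n) = (of_int n - of_int (k t) - 1) * \<tau>"
      "dist (P m) (P n) = (of_int n - of_int m) * \<tau>"
      using Pd that tp by (auto simp: abs_if algebra_simps)
    ultimately show ?thesis using G1[of t] unfolding r_def by (auto simp: algebra_simps)
  qed
  then show ?thesis using that G1 unfolding k_def by blast
qed

lemma axis_param_if_integer_orbit:
  assumes f: "isometry T f" and tp: "\<tau> > 0" and PT: "\<And>k. P k \<in> T"
    and Pshift: "\<And>k. f (P k) = P (k + 1)"
    and Pd: "\<And>i j. dist (P i) (P j) = \<bar>of_int i - of_int j\<bar> * \<tau>"
  shows "\<exists>\<gamma>. axis_param T f \<gamma> \<tau>"
proof -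
  obtain \<gamma> where \<gamma>T: "\<And>t. \<gamma> t \<in> T" and G: "\<And>m n t. m \<le> \<lfloor>t / \<tau>\<rfloor> \<Longrightarrow> \<lfloor>t / \<tau>\<rfloor> + 1 \<le> n \<Longrightarrow>
      dist (P m) (\<gamma> t) = t - of_int m * \<tau> \<and> dist (\<gamma> t) (P n) = of_int n * \<tau> - t"
    using integer_orbit_interpolation[OF tp PT Pd] by blast
  have iso: "dist (\<gamma> s) (\<gamma> t) = t - s" if "s \<le> t" for s t
  proof -
    define m where "m = \<lfloor>s / \<tau>\<rfloor>"
    define n where "n = \<lfloor>t / \<tau>\<rfloor> + 1"
    have mn: "m \<le> \<lfloor>t / \<tau>\<rfloor>" unfolding m_def using that tp
      by (intro floor_mono divide_right_mono) auto
    have "between (P m) (\<gamma> s) (P n)" "between (P m) (\<gamma> t) (P n)"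
      using G[of m s n] G[of m t n] mn Pd[of m n] tp unfolding between_def m_def n_def
      by (auto simp: abs_if algebra_simps)
    then have "dist (\<gamma> s) (\<gamma> t) = \<bar>dist (P m) (\<gamma> s) - dist (P m) (\<gamma> t)\<bar>"
      using dist_between[OF PT PT \<gamma>T \<gamma>T] by blast
    then show ?thesis using G[of m s n] G[of m t n] mn that unfolding m_def n_def by auto
  qed
  have shift: "f (\<gamma> t) = \<gamma> (t + \<tau>)" for t
  proof -
    define k where "k = \<lfloor>t / \<tau>\<rfloor>"
    have k': "\<lfloor>(t + \<tau>) / \<tau>\<rfloor> = k + 1" unfolding k_def using tp
      by (simp add: add_divide_distrib floor_add_int[symmetric])
    have "dist (P (k + 1)) (f (\<gamma> t)) = t - of_int k * \<tau>"
      "dist (f (\<gamma> t)) (P (k + 2)) = of_int (k + 1) * \<tau> - t"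
      using isometry_dist[OF f PT \<gamma>T, of k t] isometry_dist[OF f \<gamma>T PT, of t "k + 1"]
        Pshift[of k] Pshift[of "k + 1"] G[of k t "k + 1"] unfolding k_def by (simp_all add: add.assoc)
    moreover have "dist (P (k + 1)) (\<gamma> (t + \<tau>)) = t - of_int k * \<tau>"
      "dist (\<gamma> (t + \<tau>)) (P (k + 2)) = of_int (k + 1) * \<tau> - t"
      using G[of "k + 1" "t + \<tau>" "k + 2"] k' by (simp_all add: algebra_simps)
    moreover have "dist (P (k + 1)) (P (k + 2)) = \<tau>" using Pd[of "k + 1" "k + 2"] by simp
    ultimately have "between (P (k + 1)) (f (\<gamma> t)) (P (k + 2))"
      "between (P (k + 1)) (\<gamma> (t + \<tau>)) (P (k + 2))"
      "dist (P (k + 1)) (f (\<gamma> t)) = dist (P (k + 1)) (\<gamma> (t + \<tau>))"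
      unfolding between_def by (simp_all add: algebra_simps)
    then show ?thesis using between_unique[OF PT PT isometry_mem[OF f \<gamma>T] \<gamma>T] by blast
  qed
  have "dist (\<gamma> s) (\<gamma> t) = \<bar>s - t\<bar>" for s t
    using iso[of s t] iso[of t s] by (cases "s \<le> t") (auto simp: dist_commute)
  then have "axis_param T f \<gamma> \<tau>" unfolding axis_param_def using tp \<gamma>T shift by auto
  then show ?thesis by blast
qed

lemma axis_param_exists:
  assumes f: "isometry T f" and "\<not> elliptic T f"
  obtains \<gamma> \<tau> where "axis_param T f \<gamma> \<tau>"
proof -
  obtain a where a: "a \<in> T" "dist a (f a) > 0" "dist a (f (f a)) = 2 * dist a (f a)"
    using aligned_point_if_not_elliptic[OF assms] .
  obtain P :: "int \<Rightarrow> 'a" where P: "P 0 = a" "\<And>k. P k \<in> T" "\<And>k. f (P k) = P (k + 1)"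
    using integer_orbit[OF f a(1)] by auto
  have "dist (P i) (P j) = \<bar>of_int i - of_int j\<bar> * dist a (f a)" for i j
    using dist_integer_orbit_if_aligned[where P = P, OF f a(1,3) P] .
  from axis_param_if_integer_orbit[OF f a(2) P(2,3) this]
  obtain \<gamma> where "axis_param T f \<gamma> (dist a (f a))" by blast
  then show ?thesis by (rule that)
qed

lemma axis_param_transl_len:
  assumes f: "isometry T f" and "loxodromic T f"
  obtains \<gamma> where "axis_param T f \<gamma> (transl_len T f)" "axis T f = range \<gamma>"
proof -
  obtain \<gamma> \<tau> where ax: "axis_param T f \<gamma> \<tau>"
    using axis_param_exists[OF f] assms(2) unfolding loxodromic_def by blast
  then show ?thesis using that transl_len_axis_param[OF f ax] by simp
qed

lemma transl_len_pos_iff: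
  assumes f: "isometry T f"
  shows "transl_len T f > 0 \<longleftrightarrow> loxodromic T f"
proof (cases "elliptic T f")
  case False
  then obtain \<gamma> where "axis_param T f \<gamma> (transl_len T f)"
    using axis_param_transl_len[OF f] unfolding loxodromic_def by blast
  then show ?thesis using False axis_paramD(1) unfolding loxodromic_def by blast
qed (simp add: loxodromic_def transl_len_def)

lemma transl_len_nonneg: "isometry T f \<Longrightarrow> transl_len T f \<ge> 0"
  using transl_len_pos_iff unfolding loxodromic_def transl_len_def by fastforce

section \<open>Products of two isometries\<close>

text \<open>\<pi> is the projection of y to the fixed point set or to the axis of k.\<close>
lemma char_set_projection:
  assumes k: "isometry T k" and y: "y \<in> T"
  obtains \<pi> where "\<pi> \<in> T" "between y \<pi> (k y)"
    "dist y \<pi> = (dist y (k y) - transl_len T k) / 2" "dist y (k \<pi>) = dist \<pi> (k y)"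
proof (cases "elliptic T k")
  case True
  then obtain p where "p \<in> T" "k p = p" unfolding elliptic_def Fix_def by auto
  then obtain m where "m \<in> T" "k m = m" "dist y m = dist y (k y) / 2" "dist m (k y) = dist y (k y) / 2"
    using fixed_midpoint[OF k _ _ y] by blast
  then show ?thesis using that True unfolding between_def transl_len_def by simp
next
  case False
  then obtain \<delta> where ax: "axis_param T k \<delta> (transl_len T k)"
    using axis_param_transl_len[OF k] unfolding loxodromic_def by blast
  note A = axis_paramD[OF ax]
  obtain D t0 where pr: "\<And>t. dist y (\<delta> t) = D + \<bar>t - t0\<bar>"
    using dist_to_line[OF A(2) y] by blast
  note ds = axis_displacement[OF k ax y pr]
  show ?thesis
  proof (rule that[of "\<delta> t0"])
    show "\<delta> t0 \<in> T" "between y (\<delta> t0) (k y)"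
      "dist y (\<delta> t0) = (dist y (k y) - transl_len T k) / 2"
      "dist y (k (\<delta> t0)) = dist (\<delta> t0) (k y)"
      using A(1,3) A(5)[of t0] pr[of t0] pr[of "t0 + transl_len T k"] ds(1) ds(2)[of t0]
      unfolding between_def by (auto simp: dist_commute)
  qed
qed

lemma isometry_maps_seg_part:
  assumes k: "isometry T k" and T: "y \<in> T" "\<pi> \<in> T" "z \<in> T" "w \<in> T"
    and "between y \<pi> (k y)" "dist y (k \<pi>) = dist \<pi> (k y)" "between y z \<pi>"
    and "between (k y) w y" "dist (k y) w = dist y z"
  shows "k z = w"
proof -
  have kz: "dist (k y) (k z) = dist y z" "dist (k z) (k \<pi>) = dist z \<pi>"
    using isometry_dist[OF k] T by auto
  have "dist (k z) y \<le> dist (k z) (k \<pi>) + dist (k \<pi>) y"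
    "dist (k y) y \<le> dist (k y) (k z) + dist (k z) y" by (rule dist_triangle)+
  then have "between (k y) (k z) y"
    using kz assms(6-8) unfolding between_def by (auto simp: dist_commute)
  then show ?thesis
    using between_unique[OF isometry_mem[OF k T(1)] T(1) isometry_mem[OF k T(3)] T(4)] kz(1) assms(9,10)
    by simp
qed

text \<open>If k (f x) = x, then k reverses the arc of the axis of f from the projection \<pi> of f x
  for k to the projection of f x to the axis of f.\<close>
lemma creases_neg_if_elliptic_comp:
  assumes f: "isometry T f" and k: "isometry T k"
    and lt: "transl_len T k < transl_len T f" and ell: "elliptic T (f \<circ> k)"
  shows "creases_neg T f k ((transl_len T f - transl_len T k) / 2)"
proof -
  define \<tau>f where "\<tau>f = transl_len T f"
  define \<tau>k where "\<tau>k = transl_len T k"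
  have tk0: "\<tau>k \<ge> 0" unfolding \<tau>k_def using transl_len_nonneg[OF k] .
  obtain x where x: "x \<in> T" and kfx: "k (f x) = x"
    using ell elliptic_comp_commute[OF f k] elliptic_comp_iff by metis
  have "loxodromic T f" using lt tk0 transl_len_pos_iff[OF f] unfolding \<tau>k_def by simp
  then obtain \<delta> where ax: "axis_param T f \<delta> \<tau>f"
    using axis_param_transl_len[OF f] unfolding \<tau>f_def by blast
  note A = axis_paramD[OF ax]
  define y where "y = f x"
  have yT: "y \<in> T" and ky: "k y = x" unfolding y_def using isometry_mem[OF f x] kfx by auto
  obtain D t0 where pr: "\<And>t. dist x (\<delta> t) = D + \<bar>t - t0\<bar>"
    using dist_to_line[OF A(2) x] by blast
  define G where "G = dist x y"
  have G: "G = 2*D + \<tau>f" and dy: "\<And>t. dist y (\<delta> t) = D + \<bar>t - t0 - \<tau>f\<bar>"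
    using axis_displacement[OF f ax x pr] unfolding G_def y_def by auto
  obtain \<pi> where pi: "\<pi> \<in> T" "between y \<pi> x" "dist y \<pi> = (G - \<tau>k)/2" "dist y (k \<pi>) = dist \<pi> x"
    using char_set_projection[OF k yT] ky unfolding G_def \<tau>k_def by (metis dist_commute)
  define ln where "ln = (\<tau>f - \<tau>k)/2"
  define a where "a = t0 + \<tau>f/2 + \<tau>k/2"
  have ln0: "ln \<ge> 0" unfolding ln_def \<tau>k_def \<tau>f_def using lt by simp
  have "between y (\<delta> a) x" "dist y (\<delta> a) = (G - \<tau>k)/2"
    using dy[of a] pr[of a] lt G G_def tk0 unfolding a_def \<tau>k_def \<tau>f_def between_def
    by (auto simp: dist_commute)
  then have pia: "\<pi> = \<delta> a" using between_unique[OF yT x pi(1) A(3) pi(2)] pi(3) by simp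
  have "k (\<delta> (a + s)) = \<delta> (t0 + ln - s)" if s: "s \<in> {0..ln}" for s
  proof (rule isometry_maps_seg_part[OF k yT pi(1) A(3) A(3) pi(2)[folded ky] pi(4)[folded ky]])
    show "between y (\<delta> (a + s)) \<pi>"
      using dy[of "a + s"] dy[of a] A(4)[of "a + s" a] s G unfolding pia a_def ln_def between_def
      by (auto simp: dist_commute)
    show "between (k y) (\<delta> (t0 + ln - s)) y" "dist (k y) (\<delta> (t0 + ln - s)) = dist y (\<delta> (a + s))"
      using pr[of "t0 + ln - s"] dy[of "t0 + ln - s"] dy[of "a + s"] s G ln0 tk0 A(1)
      unfolding ky ln_def a_def between_def G_def[symmetric] by (auto simp: dist_commute abs_if field_simps)
  qed
  then show ?thesis unfolding creases_neg_def
  proof (intro exI conjI)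
    show "axis_param T f \<delta> \<tau>f" by (rule ax)
    show "a \<le> a + ln" "(transl_len T f - transl_len T k) / 2 \<le> a + ln - a"
      "t0 + (a + ln - a) \<le> a"
      using ln0 tk0 unfolding ln_def a_def \<tau>f_def \<tau>k_def by auto
  qed simp
qed

text \<open>Conversely, let k map \<gamma> (a + s) to \<gamma> (c + (b - a) - s) for 0 \<le> s \<le> b - a, and let
  G = a - c - (b - a) be the displacement of x = \<gamma> a.  If G \<le> \<tau>, then \<gamma> (a + (\<tau> - G)/2) is
  fixed by f \<circ> k.  Otherwise k reverses the part of [x, k x] near x, so the point w = \<gamma> t of
  [x, k x] at distance (G - \<tau>)/2 from x satisfies k w = \<gamma> (t - \<tau>).\<close>
lemma elliptic_comp_if_creases_neg:
  assumes f: "isometry T f" and k: "isometry T k"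
    and lt: "transl_len T k < transl_len T f"
    and cr: "creases_neg T f k ((transl_len T f - transl_len T k) / 2)"
  shows "elliptic T (f \<circ> k)"
proof -
  obtain \<gamma> \<tau> a b c where ax: "axis_param T f \<gamma> \<tau>" and ab: "a \<le> b"
    and len: "(transl_len T f - transl_len T k) / 2 \<le> b - a" and cb: "c + (b - a) \<le> a"
    and rev: "\<And>s. s \<in> {0..b - a} \<Longrightarrow> k (\<gamma> (a + s)) = \<gamma> (c + (b - a) - s)"
    using cr unfolding creases_neg_def by blast
  define \<tau>k where "\<tau>k = transl_len T k"
  have \<tau>: "transl_len T f = \<tau>" using transl_len_axis_param[OF f ax] by simp
  note A = axis_paramD[OF ax]
  define x where "x = \<gamma> a"
  have xT: "x \<in> T" unfolding x_def using A(3) .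
  have kx: "k x = \<gamma> (c + (b - a))" using rev[of 0] ab unfolding x_def by simp
  define G where "G = dist x (k x)"
  have G: "G = a - c - (b - a)" unfolding G_def kx unfolding x_def A(4) using cb by simp
  obtain \<pi> where pi: "\<pi> \<in> T" "between x \<pi> (k x)" "dist x \<pi> = (G - \<tau>k)/2"
    "dist x (k \<pi>) = dist \<pi> (k x)"
    using char_set_projection[OF k xT] unfolding G_def \<tau>k_def by blast
  have "0 \<le> (G - \<tau>k)/2" using pi(3) by (metis zero_le_dist)
  then have Gtk: "G \<ge> \<tau>k" by simp
  show ?thesis
  proof (cases "G \<le> \<tau>")
    case True
    define s where "s = (\<tau> - G)/2"
    have s: "s \<in> {0..b - a}" unfolding s_def using True Gtk len lt \<tau> unfolding \<tau>k_def by auto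
    have "f (k (\<gamma> (a + s))) = \<gamma> (c + (b - a) - s + \<tau>)" using rev[OF s] A(5) by simp
    also have "c + (b - a) - s + \<tau> = a + s" unfolding s_def G by (simp add: field_simps)
    finally show ?thesis unfolding elliptic_comp_iff using A(3) by blast
  next
    case False
    define t where "t = a - G/2 + \<tau>/2"
    have G0: "0 \<le> G" unfolding G_def by simp
    have w: "between x (\<gamma> t) (k x)" "dist x (\<gamma> t) = (G - \<tau>)/2"
      unfolding between_def G_def[symmetric] unfolding kx unfolding x_def A(4) t_def
      using False G A(1) G0 by (auto simp: abs_if field_simps)
    have "between x (\<gamma> t) \<pi>"
      using dist_between[OF xT isometry_mem[OF k xT] A(3) pi(1) w(1) pi(2)] w(2) pi(3) lt \<tau>
      unfolding between_def \<tau>k_def by (simp add: field_simps)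
    moreover have "between (k x) (\<gamma> (t - \<tau>)) x" "dist (k x) (\<gamma> (t - \<tau>)) = (G - \<tau>)/2"
      unfolding between_def G_def[symmetric] unfolding kx unfolding x_def A(4) t_def
      using False G A(1) G0 by (auto simp: abs_if field_simps dist_commute)
    ultimately have "k (\<gamma> t) = \<gamma> (t - \<tau>)"
      using isometry_maps_seg_part[OF k xT pi(1) A(3) A(3) pi(2,4)] w(2) by simp
    then have "f (k (\<gamma> t)) = \<gamma> t" using A(5)[of "t - \<tau>"] by simp
    then show ?thesis unfolding elliptic_comp_iff using A(3) by blast
  qed
qed

lemma creases_neg_iff_elliptic_comp:
  assumes "isometry T f" "isometry T k" "transl_len T k < transl_len T f"
  shows "creases_neg T f k ((transl_len T f - transl_len T k) / 2) \<longleftrightarrow> elliptic T (f \<circ> k)"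
  using creases_neg_if_elliptic_comp[OF assms] elliptic_comp_if_creases_neg[OF assms] by blast

text \<open>With a fixed point p of g \<circ> h, the midpoints of [p, h p] provided by the fixed points
  of h and of g coincide.\<close>
lemma elliptic_comp_iff_common_fixed_point:
  assumes g: "isometry T g" and h: "isometry T h" and "elliptic T g" "elliptic T h"
  shows "elliptic T (g \<circ> h) \<longleftrightarrow> Fix T g \<inter> Fix T h \<noteq> {}"
proof
  assume "elliptic T (g \<circ> h)"
  then obtain p where p: "p \<in> T" "g (h p) = p" unfolding elliptic_comp_iff by blast
  obtain pg where pg: "pg \<in> T" "g pg = pg" using assms(3) unfolding elliptic_def Fix_def by auto
  obtain ph where ph: "ph \<in> T" "h ph = ph" using assms(4) unfolding elliptic_def Fix_def by auto
  have hp: "h p \<in> T" using isometry_mem[OF h p(1)] .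
  obtain m where m: "m \<in> T" "h m = m" "dist p m = dist p (h p) / 2" "dist m (h p) = dist p (h p) / 2"
    using fixed_midpoint[OF h ph p(1)] by blast
  obtain m' where m': "m' \<in> T" "g m' = m'" "dist (h p) m' = dist (h p) p / 2"
    "dist m' p = dist (h p) p / 2"
    using fixed_midpoint[OF g pg hp] p(2) by metis
  have "between p m (h p)" "between p m' (h p)"
    using m m' unfolding between_def by (simp_all add: dist_commute)
  then have "m = m'" using between_unique[OF p(1) hp m(1) m'(1)] m(3) m'(4) by (simp add: dist_commute)
  then show "Fix T g \<inter> Fix T h \<noteq> {}" using m m' unfolding Fix_def by auto
next
  assume "Fix T g \<inter> Fix T h \<noteq> {}"
  then obtain p where "p \<in> T" "g p = p" "h p = p" unfolding Fix_def by auto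
  then show "elliptic T (g \<circ> h)" unfolding elliptic_comp_iff by (intro bexI[of _ p]) simp_all
qed

lemma geodesic_lines_agree_between:
  assumes \<alpha>: "geodesic_line \<alpha>" and \<beta>: "geodesic_line \<beta>"
    and "\<alpha> s = \<beta> s" "\<alpha> t = \<beta> t" "s \<le> r" "r \<le> t"
  shows "\<alpha> r = \<beta> r"
proof -
  note L = geodesic_lineD[OF \<alpha>] and L' = geodesic_lineD[OF \<beta>]
  have "between (\<alpha> s) (\<alpha> r) (\<alpha> t)" "between (\<alpha> s) (\<beta> r) (\<alpha> t)"
    "dist (\<alpha> s) (\<beta> r) = dist (\<alpha> s) (\<alpha> r)"
    using L(2)[of s r] L(2)[of r t] L(2)[of s t] L'(2)[of s r] L'(2)[of r t] assms(3-6)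
    unfolding between_def by simp_all
  then show ?thesis using between_unique[OF L(1) L(1) L(1) L'(1)] by simp
qed

text \<open>The parameter set J on which two lines agree is a closed interval, so if its image
  has diameter at least \<tau> then J contains two points \<tau> apart.\<close>
lemma geodesic_lines_agree_long:
  assumes \<alpha>: "geodesic_line \<alpha>" and \<beta>: "geodesic_line \<beta>" and "\<tau> > 0"
    and long: "ereal \<tau> \<le> arc_len (\<alpha> ` {s. \<alpha> s = \<beta> s})"
  obtains s where "\<alpha> s = \<beta> s" "\<alpha> (s + \<tau>) = \<beta> (s + \<tau>)"
proof (rule ccontr)
  define J where "J = {s. \<alpha> s = \<beta> s}"
  assume "\<not> thesis"
  then have no: "s \<in> J \<Longrightarrow> s + \<tau> \<notin> J" for s using that unfolding J_def by blast
  have short: "t - s < \<tau>" if "s \<in> J" "t \<in> J" for s t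
    using no[OF that(1)] geodesic_lines_agree_between[OF \<alpha> \<beta>, of s t "s + \<tau>"] that \<open>\<tau> > 0\<close>
    unfolding J_def by force
  obtain s0 where s0: "s0 \<in> J" using nonempty_if_arc_len_ge[OF long] unfolding J_def by blast
  have "continuous_on UNIV \<alpha>" "continuous_on UNIV \<beta>"
    using continuous_on_if_isometric geodesic_lineD(2) \<alpha> \<beta> by blast+
  then have "closed {s \<in> UNIV. \<alpha> s = \<beta> s}" by (rule closed_agreement_set[OF closed_UNIV])
  then have "closed J" unfolding J_def by simp
  moreover have "J \<subseteq> {s0 - \<tau>..s0 + \<tau>}" using short s0 by fastforce
  ultimately obtain m M where "m \<in> J" "M \<in> J" and mM: "\<And>t. t \<in> J \<Longrightarrow> m \<le> t \<and> t \<le> M"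
    using closed_bounded_real_attains_bounds s0 by blast
  then have "M - m < \<tau>" using short by blast
  have "dist x y \<le> M - m" if xy: "x \<in> \<alpha> ` J" "y \<in> \<alpha> ` J" for x y
  proof -
    obtain s t where "s \<in> J" "t \<in> J" "x = \<alpha> s" "y = \<alpha> t" using xy by blast
    then show ?thesis using mM[of s] mM[of t] geodesic_lineD(2)[OF \<alpha>, of s t] by auto
  qed
  then have "arc_len (\<alpha> ` J) \<le> ereal (M - m)" by (rule arc_len_le)
  with long[folded J_def] have "ereal \<tau> \<le> ereal (M - m)" by (rule order_trans)
  then show False using \<open>M - m < \<tau>\<close> by simp
qed

text \<open>Reparametrising the axis of h backwards, the two axes agree along their intersection;
  two points of it at distance \<tau> are then swapped into each other by g and h.\<close>
lemma elliptic_comp_if_opposite_directions: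
  assumes g: "isometry T g" and h: "isometry T h"
    and opp: "opposite_directions T g h" and eq: "transl_len T g = transl_len T h"
    and long: "ereal (transl_len T g) \<le> arc_len (axis T g \<inter> axis T h)"
  shows "elliptic T (g \<circ> h)"
proof -
  obtain \<gamma> \<sigma> \<delta> \<rho> where axg: "axis_param T g \<gamma> \<sigma>" and axh: "axis_param T h \<delta> \<rho>"
    and op: "\<And>s t u v. \<gamma> s = \<delta> u \<Longrightarrow> \<gamma> t = \<delta> v \<Longrightarrow> s < t \<Longrightarrow> v < u"
    using opp unfolding opposite_directions_def by blast
  note A = axis_paramD[OF axg] and B = axis_paramD[OF axh]
  have tg: "transl_len T g = \<sigma>" "axis T g = range \<gamma>" using transl_len_axis_param[OF g axg] by auto
  have th: "transl_len T h = \<rho>" "axis T h = range \<delta>" using transl_len_axis_param[OF h axh] by auto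
  obtain s0 u0 where s0: "\<gamma> s0 = \<delta> u0" using nonempty_if_arc_len_ge[OF long] tg th by auto
  define \<delta>' where "\<delta>' s = \<delta> (s0 + u0 - s)" for s
  have \<delta>': "geodesic_line \<delta>'"
    unfolding geodesic_line_def \<delta>'_def using B(3,4) by (auto simp: abs_minus_commute)
  have "range \<gamma> \<inter> range \<delta> = \<gamma> ` {s. \<gamma> s = \<delta>' s}"
  proof (intro equalityI subsetI)
    fix x assume "x \<in> range \<gamma> \<inter> range \<delta>"
    then obtain s u where "x = \<gamma> s" "\<gamma> s = \<delta> u" by auto
    then show "x \<in> \<gamma> ` {s. \<gamma> s = \<delta>' s}"
      using opposite_lines_crossing[OF A(4) B(4) op s0, where s=s and u=u] unfolding \<delta>'_def by auto
  next
    fix x assume "x \<in> \<gamma> ` {s. \<gamma> s = \<delta>' s}"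
    then obtain s where "x = \<gamma> s" "\<gamma> s = \<delta> (s0 + u0 - s)" unfolding \<delta>'_def by blast
    then show "x \<in> range \<gamma> \<inter> range \<delta>" by (metis IntI rangeI)
  qed
  then have "ereal \<sigma> \<le> arc_len (\<gamma> ` {s. \<gamma> s = \<delta>' s})" using long tg th by simp
  then obtain s where s: "\<gamma> s = \<delta>' s" "\<gamma> (s + \<sigma>) = \<delta>' (s + \<sigma>)"
    using geodesic_lines_agree_long[OF A(2) \<delta>' A(1)] by blast
  have "h (\<gamma> (s + \<sigma>)) = \<gamma> s"
    using s B(5) eq tg th unfolding \<delta>'_def by (simp add: algebra_simps)
  then have "g (h (\<gamma> (s + \<sigma>))) = \<gamma> (s + \<sigma>)" using A(5) by simp
  then show ?thesis unfolding elliptic_comp_iff using A(3) by blast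
qed

text \<open>If g (h p) = p for axes with the same translation length, the projections of h p
  to the axis of g and of p to the axis of h are both at distance D from h p and p,
  which forces the axes to share the segment between them, traversed in opposite directions.\<close>
lemma axes_cross_if_elliptic_comp:
  assumes g: "isometry T g" and h: "isometry T h"
    and axg: "axis_param T g \<gamma> \<tau>" and axh: "axis_param T h \<delta> \<tau>" and ell: "elliptic T (g \<circ> h)"
  obtains t0 u0 where "\<gamma> t0 = \<delta> (u0 + \<tau>)" "\<gamma> (t0 + \<tau>) = \<delta> u0"
proof -
  note A = axis_paramD[OF axg] and B = axis_paramD[OF axh]
  obtain p where p: "p \<in> T" and gq: "g (h p) = p" using ell unfolding elliptic_comp_iff by blast
  define q where "q = h p"
  have qT: "q \<in> T" unfolding q_def using isometry_mem[OF h p] .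
  obtain D1 t0 where pr1: "\<And>t. dist q (\<gamma> t) = D1 + \<bar>t - t0\<bar>"
    using dist_to_line[OF A(2) qT] by blast
  note d1 = axis_displacement[OF g axg qT pr1]
  obtain D2 u0 where pr2: "\<And>t. dist p (\<delta> t) = D2 + \<bar>t - u0\<bar>"
    using dist_to_line[OF B(2) p] by blast
  note d2 = axis_displacement[OF h axh p pr2]
  have D: "D1 = D2" using d1(1) d2(1) gq unfolding q_def by (simp add: dist_commute)
  have "between q (\<gamma> t) p" "between q (\<delta> (u0 + \<tau> + t0 - t)) p"
    "dist q (\<gamma> t) = dist q (\<delta> (u0 + \<tau> + t0 - t))" if "t0 \<le> t" "t \<le> t0 + \<tau>" for t
    using pr1[of t] d1(1) d1(2)[of t] pr2[of "u0 + \<tau> + t0 - t"] d2(2)[of "u0 + \<tau> + t0 - t"] D gq that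
    unfolding between_def q_def by (auto simp: dist_commute)
  then have "\<gamma> t = \<delta> (u0 + \<tau> + t0 - t)" if "t0 \<le> t" "t \<le> t0 + \<tau>" for t
    using between_unique[OF qT p A(3) B(3)] that by blast
  from this[of t0] this[of "t0 + \<tau>"] show ?thesis using that A(1) by simp
qed

lemma opposite_directions_if_elliptic_comp:
  assumes g: "isometry T g" and h: "isometry T h"
    and "loxodromic T g" "loxodromic T h" and eq: "transl_len T g = transl_len T h"
    and ell: "elliptic T (g \<circ> h)"
  shows "ereal (transl_len T g) \<le> arc_len (axis T g \<inter> axis T h)" "opposite_directions T g h"
proof -
  define \<tau> where "\<tau> = transl_len T g"
  obtain \<gamma> where axg: "axis_param T g \<gamma> \<tau>" and ag: "axis T g = range \<gamma>"
    using axis_param_transl_len[OF g assms(3)] unfolding \<tau>_def by blast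
  obtain \<delta> where axh: "axis_param T h \<delta> \<tau>" and ah: "axis T h = range \<delta>"
    using axis_param_transl_len[OF h assms(4)] unfolding \<tau>_def eq by blast
  note A = axis_paramD[OF axg] and B = axis_paramD[OF axh]
  obtain t0 u0 where e1: "\<gamma> t0 = \<delta> (u0 + \<tau>)" and e2: "\<gamma> (t0 + \<tau>) = \<delta> u0"
    using axes_cross_if_elliptic_comp[OF g h axg axh ell] .
  have "ereal (dist (\<gamma> t0) (\<gamma> (t0 + \<tau>))) \<le> arc_len (range \<gamma> \<inter> range \<delta>)"
    using e1 e2 by (intro dist_le_arc_len) (metis IntI rangeI)+
  then show "ereal (transl_len T g) \<le> arc_len (axis T g \<inter> axis T h)"
    using A(1) unfolding ag ah A(4) \<tau>_def[symmetric] by simp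
  have reflect: "u = u0 + \<tau> + t0 - s" if "\<gamma> s = \<delta> u" for s u
  proof -
    have "\<bar>s - t0\<bar> = \<bar>u - (u0 + \<tau>)\<bar>" "\<bar>s - (t0 + \<tau>)\<bar> = \<bar>u - u0\<bar>"
      using A(4)[of s t0] B(4)[of u "u0 + \<tau>"] A(4)[of s "t0 + \<tau>"] B(4)[of u u0] that e1 e2
      by simp_all
    then show ?thesis using A(1) by (auto simp: abs_if split: if_splits)
  qed
  show "opposite_directions T g h" unfolding opposite_directions_def
  proof (intro exI conjI allI impI)
    fix s t u v assume "\<gamma> s = \<delta> u \<and> \<gamma> t = \<delta> v \<and> s < t"
    then show "v < u" using reflect[of s u] reflect[of t v] by auto
  qed (fact axg axh)+
qed

lemma opposite_directions_iff_elliptic_comp: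
  assumes "isometry T g" "isometry T h" "loxodromic T g" "loxodromic T h"
    and "transl_len T g = transl_len T h"
  shows "ereal (transl_len T g) \<le> arc_len (axis T g \<inter> axis T h) \<and> opposite_directions T g h
    \<longleftrightarrow> elliptic T (g \<circ> h)"
  using opposite_directions_if_elliptic_comp[OF assms] elliptic_comp_if_opposite_directions[OF assms(1,2)]
    assms(5) by blast

end

theorem proposition2p15:
  fixes T :: "'a::metric_space set" and g h :: "'a \<Rightarrow> 'a"
  assumes "real_tree T" and "isometry T g" and "isometry T h"
  shows "elliptic T (g \<circ> h) \<longleftrightarrow>
    (elliptic T g \<and> elliptic T h \<and> Fix T g \<inter> Fix T h \<noteq> {})
  \<or> (transl_len T h < transl_len T g \<and>
       creases_neg T g h ((transl_len T g - transl_len T h) / 2))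
  \<or> (transl_len T g < transl_len T h \<and>
       creases_neg T h g ((transl_len T h - transl_len T g) / 2))
  \<or> (loxodromic T g \<and> loxodromic T h \<and> transl_len T g = transl_len T h \<and>
       ereal (transl_len T g) \<le> arc_len (axis T g \<inter> axis T h) \<and>
       opposite_directions T g h)"
proof -
  interpret metric_tree T by standard (fact assms(1))
  note g = assms(2) and h = assms(3)
  note pos = transl_len_pos_iff[OF g] transl_len_pos_iff[OF h]
  have ell_tl: "elliptic T f \<Longrightarrow> transl_len T f = 0" for f unfolding transl_len_def by simp
  consider (ell) "elliptic T g" "elliptic T h"
    | (gt) "transl_len T h < transl_len T g" | (lt) "transl_len T g < transl_len T h"
    | (eq) "loxodromic T g" "loxodromic T h" "transl_len T g = transl_len T h"
    using pos transl_len_nonneg[OF g] transl_len_nonneg[OF h] unfolding loxodromic_def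
    by (metis linorder_neqE_linordered_idom)
  then show ?thesis
  proof cases
    case ell
    then show ?thesis
      using elliptic_comp_iff_common_fixed_point[OF g h ell] ell_tl unfolding loxodromic_def by auto
  next
    case gt
    then show ?thesis using creases_neg_iff_elliptic_comp[OF g h gt] pos ell_tl
      unfolding loxodromic_def by auto
  next
    case lt
    then show ?thesis using creases_neg_iff_elliptic_comp[OF h g lt] pos ell_tl
      elliptic_comp_commute[OF g h] unfolding loxodromic_def by auto
  next
    case eq
    then show ?thesis using opposite_directions_iff_elliptic_comp[OF g h eq] pos
      unfolding loxodromic_def by auto
  qed
qed

end
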